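(* Let $n\ge2$ and $\alpha\in\mathbb{R}\setminus\pi\mathbb{Z}$. Then, as power series in $z$ (convergent for $|z|$ small), $$F_n(z,\alpha):=\sum_{m=0}^\infty\sum_{k=0}^{n-1}\cot^m\frac{\alpha+k\pi}{n}\,z^m=\frac{n}{1+z^2}\Big(1-z\cot(n\arctan z-\alpha)\Big).$$ More generally, for $x\in\mathbb{C}$, $$M_{xJ_n+B_n}(z)=\frac{n}{1+z^2}\left(1+z\,\frac{x+\tan(n\arctan z)}{1-x\tan(n\arctan z)}\right).$$
   Context: $J_n$ is the $n\times n$ all-ones matrix, and $B_n=i\,M$ where $M$ is the $n\times n$ matrix with zero diagonal, entries $1$ above and $-1$ below the diagonal. For an $n\times n$ matrix $C$, $M_C(z)=\operatorname{Tr}\big((I-zC)^{-1}\big)=\sum_{m\ge0}\operatorname{Tr}(C^m)z^m$ (moment generating function with respect to the non-normalized trace). In $F_n$ the $m=0$ term equals $n$. *)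

theory Defs
  imports "HOL-Analysis.Analysis" "Jordan_Normal_Form.Matrix"
begin

definition mat_trace :: "complex mat \<Rightarrow> complex" where
  "mat_trace A = (\<Sum>i<dim_row A. A $$ (i, i))"

definition J_mat :: "nat \<Rightarrow> complex mat" where
  "J_mat n = mat n n (\<lambda>_. 1)"

definition B_mat :: "nat \<Rightarrow> complex mat" where
  "B_mat n = mat n n (\<lambda>(i, j). \<i> * (if i < j then 1 else if j < i then -1 else 0))"

text \<open>Coefficients of the moment generating function M_C(z) = sum_m Tr(C^m) z^m.\<close>
definition moment_coeff :: "complex mat \<Rightarrow> nat \<Rightarrow> complex" where
  "moment_coeff C m = mat_trace (C ^\<^sub>m m)"

definition F_coeff :: "nat \<Rightarrow> real \<Rightarrow> nat \<Rightarrow> real" where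
  "F_coeff n \<alpha> m = (\<Sum>k<n. cot ((\<alpha> + real k * pi) / real n) ^ m)"

end

(* For x <> i, -i the matrix C = x J_n + B_n is diagonalisable.  If w^n = (x - i)/(x + i)
   then (w^j)_j is an eigenvector of C with eigenvalue cayley w = i (1 + w)/(1 - w), and the
   n roots w_k = c zeta^k give an invertible Vandermonde matrix, so Tr (C^m) = sum_k (cayley w_k)^m.
   Since cot t = cayley (exp (-2 i t)), the coefficients of F_n are power sums of the same kind,
   taken over the n-th roots of exp (-2 i alpha).  Summing the geometric series, both generating
   functions equal sum_k 1/(1 - z cayley w_k), which is evaluated in closed form through
   sum_k 1/(w_k - b) = n b^(n-1)/(tau - b^n), where b = (1 - i z)/(1 + i z) = exp (-2 i Arctan z).
   For x = i or x = -i the matrix C is triangular with constant diagonal x. *)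

theory Submission
  imports Defs "Jordan_Normal_Form.Determinant"
begin

lemma index_mult_mat_sum:
  assumes "A \<in> carrier_mat n k" "B \<in> carrier_mat k p" "i < n" "j < p"
  shows "(A * B) $$ (i, j) = (\<Sum>l<k. A $$ (i, l) * B $$ (l, j))"
  using assms by (simp add: scalar_prod_def atLeast0LessThan)

lemma mat_trace_mult:
  assumes "A \<in> carrier_mat n k" "B \<in> carrier_mat k n"
  shows "mat_trace (A * B) = (\<Sum>i<n. \<Sum>j<k. A $$ (i, j) * B $$ (j, i))"
  unfolding mat_trace_def using assms by (auto intro!: sum.cong index_mult_mat_sum simp del: index_mult_mat(1))

lemma mat_trace_mult_comm:
  assumes "A \<in> carrier_mat n k" "B \<in> carrier_mat k n"
  shows "mat_trace (A * B) = mat_trace (B * A)"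
  unfolding mat_trace_mult[OF assms] mat_trace_mult[OF assms(2,1)]
  by (subst sum.swap) (simp add: mult.commute)

lemma pow_mat_diagonal:
  "mat n n (\<lambda>(i, j). if i = j then d i else 0) ^\<^sub>m m
     = mat n n (\<lambda>(i, j). if i = j then (d i :: complex) ^ m else 0)"
proof (induction m)
  case (Suc m)
  have "(\<Sum>l<n. (if i = l then d i ^ m else 0) * (if l = j then d l else 0))
      = (\<Sum>l<n. if l = i then d i ^ m * (if i = j then d i else 0) else 0)" for i j
    by (intro sum.cong) auto
  then show ?case
    by (intro eq_matI) (simp_all add: Suc index_mult_mat_sum[of _ n n _ n] del: index_mult_mat(1))
qed auto

lemma mat_trace_pow_diagonalizable:
  fixes C V W :: "complex mat" and d :: "nat \<Rightarrow> complex"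
  assumes C: "C \<in> carrier_mat n n" and V: "V \<in> carrier_mat n n" and W: "W \<in> carrier_mat n n"
    and VW: "V * W = 1\<^sub>m n" and CV: "C * V = V * mat n n (\<lambda>(i, j). if i = j then d i else 0)"
  shows "mat_trace (C ^\<^sub>m m) = (\<Sum>i<n. d i ^ m)"
proof -
  define D where "D = mat n n (\<lambda>(i, j). if i = j then d i else 0)"
  have D: "D \<in> carrier_mat n n" unfolding D_def by simp
  have WV: "W * V = 1\<^sub>m n" by (rule mat_mult_left_right_inverse[OF V W VW])
  have "C = C * (V * W)" using C by (simp add: VW)
  also have "\<dots> = V * D * W" using C V W D by (simp add: CV D_def flip: assoc_mult_mat)
  finally have "similar_mat_wit C D V W"
    unfolding similar_mat_wit_def Let_def using C V W D VW WV by auto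
  then have "mat_trace (C ^\<^sub>m m) = mat_trace (V * D ^\<^sub>m m * W)"
    by (simp add: similar_mat_wit_pow_id)
  also have "\<dots> = mat_trace (W * (V * D ^\<^sub>m m))"
    using V W D by (intro mat_trace_mult_comm) auto
  also have "\<dots> = mat_trace (W * V * D ^\<^sub>m m)"
    using V W D by (simp add: assoc_mult_mat[of _ n n _ n _ n])
  also have "\<dots> = (\<Sum>i<n. d i ^ m)"
    using D by (simp add: WV D_def pow_mat_diagonal mat_trace_def)
  finally show ?thesis .
qed

lemma mat_trace_pow_triangular:
  fixes C :: "complex mat" and R :: "nat \<Rightarrow> nat \<Rightarrow> bool"
  assumes C: "C \<in> carrier_mat n n"
    and R: "irreflp R" "transp R" "\<And>a b. a \<noteq> b \<Longrightarrow> R a b \<or> R b a"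
    and zero: "\<And>i j. i < n \<Longrightarrow> j < n \<Longrightarrow> R i j \<Longrightarrow> C $$ (i, j) = 0"
  shows "mat_trace (C ^\<^sub>m m) = (\<Sum>i<n. C $$ (i, i) ^ m)"
proof -
  have "(\<forall>i<n. \<forall>j<n. R i j \<longrightarrow> (C ^\<^sub>m m) $$ (i, j) = 0) \<and> (\<forall>i<n. (C ^\<^sub>m m) $$ (i, i) = C $$ (i, i) ^ m)"
  proof (induction m)
    case 0
    show ?case using C R(1) by (auto simp: irreflp_def)
  next
    case (Suc m)
    have Cm: "C ^\<^sub>m m \<in> carrier_mat n n" using C by simp
    have entry: "(C ^\<^sub>m Suc m) $$ (i, j) = (\<Sum>l<n. (C ^\<^sub>m m) $$ (i, l) * C $$ (l, j))"
      if "i < n" "j < n" for i j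
      using index_mult_mat_sum[OF Cm C that] by simp
    show ?case
    proof (intro conjI allI impI)
      fix i j assume ij: "i < n" "j < n" "R i j"
      have "(C ^\<^sub>m m) $$ (i, l) * C $$ (l, j) = 0" if l: "l < n" for l
      proof (cases "R i l")
        case False
        then have "R l j" using ij(3) R by (metis transpD)
        then show ?thesis using zero[OF l ij(2)] by simp
      qed (use Suc ij l in auto)
      then show "(C ^\<^sub>m Suc m) $$ (i, j) = 0"
        unfolding entry[OF ij(1,2)] by (intro sum.neutral) auto
    next
      fix i assume i: "i < n"
      have "(C ^\<^sub>m m) $$ (i, l) * C $$ (l, i) = (if l = i then C $$ (i, i) ^ Suc m else 0)"
        if l: "l < n" for l
      proof (cases "l = i")
        case False
        then consider "R i l" | "R l i" using R(3) by blast
        then show ?thesis using Suc zero i l False by cases auto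
      qed (use Suc i in \<open>simp add: mult.commute\<close>)
      then show "(C ^\<^sub>m Suc m) $$ (i, i) = C $$ (i, i) ^ Suc m"
        unfolding entry[OF i i] using i by simp
    qed
  qed
  then show ?thesis using C by (simp add: mat_trace_def)
qed

lemma power_mult_root_unity:
  fixes \<zeta> c :: complex
  assumes "\<zeta> ^ n = 1"
  shows "(c * \<zeta> ^ k) ^ n = c ^ n"
proof -
  have "(\<zeta> ^ k) ^ n = (\<zeta> ^ n) ^ k" by (simp add: mult.commute flip: power_mult)
  then show ?thesis using assms by (simp add: power_mult_distrib)
qed

lemma sum_pow_mult_roots_unity:
  fixes \<zeta> c :: complex
  assumes \<zeta>: "\<zeta> ^ n = 1" "inj_on (\<lambda>k. \<zeta> ^ k) {..<n}"
  shows "(\<Sum>k<n. (c * \<zeta> ^ k) ^ e) = (if n dvd e then of_nat n * c ^ e else 0)"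
proof -
  have "(\<Sum>k<n. (c * \<zeta> ^ k) ^ e) = c ^ e * (\<Sum>k<n. (\<zeta> ^ e) ^ k)"
    by (simp add: sum_distrib_left power_mult_distrib mult.commute flip: power_mult)
  also have "\<dots> = (if n dvd e then of_nat n * c ^ e else 0)"
  proof (cases "n dvd e")
    case True
    then obtain q where "e = n * q" ..
    then have "\<zeta> ^ e = 1" using \<zeta>(1) by (simp add: power_mult)
    then show ?thesis using True by simp
  next
    case False
    show ?thesis
    proof (cases "n = 0")
      case False
      with \<open>\<not> n dvd e\<close> have n: "0 < n" "e mod n \<noteq> 0" by (auto simp: dvd_eq_mod_eq_0)
      have "\<zeta> ^ e = \<zeta> ^ (n * (e div n) + e mod n)" by simp
      also have "\<dots> = (\<zeta> ^ n) ^ (e div n) * \<zeta> ^ (e mod n)" by (simp only: power_add power_mult)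
      also have "\<dots> = \<zeta> ^ (e mod n)" using \<zeta>(1) by simp
      also have "\<dots> \<noteq> \<zeta> ^ 0"
        using inj_onD[OF \<zeta>(2), of "e mod n" 0] n by auto
      finally have "\<zeta> ^ e \<noteq> 1" by simp
      moreover have "(\<zeta> ^ e) ^ n = (\<zeta> ^ n) ^ e" by (simp add: mult.commute flip: power_mult)
      ultimately show ?thesis using \<zeta>(1) \<open>\<not> n dvd e\<close> by (simp add: geometric_sum)
    qed simp
  qed
  finally show ?thesis .
qed

lemma sum_inverse_roots_diff:
  fixes \<zeta> b c \<tau> :: complex
  assumes \<zeta>: "\<zeta> ^ n = 1" "inj_on (\<lambda>k. \<zeta> ^ k) {..<n}" and n: "0 < n"
    and c: "c ^ n = \<tau>" and b: "b ^ n \<noteq> \<tau>"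
  shows "(\<Sum>k<n. 1 / (c * \<zeta> ^ k - b)) = of_nat n * b ^ (n - 1) / (\<tau> - b ^ n)"
proof -
  have expand: "1 / (c * \<zeta> ^ k - b) = (\<Sum>i<n. b ^ (n - Suc i) * (c * \<zeta> ^ k) ^ i) / (\<tau> - b ^ n)" for k
  proof -
    define u where "u = c * \<zeta> ^ k"
    have "u ^ n = \<tau>" using c power_mult_root_unity[OF \<zeta>(1)] by (simp add: u_def)
    then have "\<tau> - b ^ n = (u - b) * (\<Sum>i<n. b ^ (n - Suc i) * u ^ i)"
      using power_diff_sumr2[of u n b] by simp
    moreover have "u - b \<noteq> 0" using b \<open>u ^ n = \<tau>\<close> by auto
    ultimately show ?thesis using b by (simp add: u_def field_simps)
  qed
  have "(\<Sum>k<n. 1 / (c * \<zeta> ^ k - b)) = (\<Sum>k<n. \<Sum>i<n. b ^ (n - Suc i) * (c * \<zeta> ^ k) ^ i) / (\<tau> - b ^ n)"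
    unfolding expand by (simp add: sum_divide_distrib)
  also have "\<dots> = (\<Sum>i<n. b ^ (n - Suc i) * (\<Sum>k<n. (c * \<zeta> ^ k) ^ i)) / (\<tau> - b ^ n)"
    by (subst sum.swap) (simp add: sum_distrib_left)
  also have "\<dots> = (\<Sum>i<n. if i = 0 then of_nat n * b ^ (n - 1) else 0) / (\<tau> - b ^ n)"
    by (intro arg_cong2[where f = "(/)"] sum.cong) (auto simp: sum_pow_mult_roots_unity[OF \<zeta>] dvd_imp_le)
  finally show ?thesis using n by simp
qed

lemma exp_root_unity:
  assumes "0 < n"
  shows "exp (- 2 * pi * \<i> / of_nat n) ^ n = 1"
    and "inj_on (\<lambda>k. exp (- 2 * pi * \<i> / of_nat n) ^ k) {..<n}"
proof -
  have pow: "exp (- 2 * pi * \<i> / of_nat n) ^ k = inverse (exp (2 * of_real pi * \<i> * of_nat k / of_nat n))" for k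
    by (simp add: exp_minus[symmetric] algebra_simps flip: exp_of_nat_mult)
  show "exp (- 2 * pi * \<i> / of_nat n) ^ n = 1"
    unfolding pow using assms by simp
  show "inj_on (\<lambda>k. exp (- 2 * pi * \<i> / of_nat n) ^ k) {..<n}"
    unfolding pow using assms by (intro inj_onI) (simp add: complex_root_unity_eq)
qed

definition cayley :: "complex \<Rightarrow> complex" where
  "cayley w = \<i> * (1 + w) / (1 - w)"

lemma cot_eq_cayley: "cot u = cayley (exp (- 2 * \<i> * u))"
proof -
  define p q where "p = exp (\<i> * u)" and "q = exp (- (\<i> * u))"
  have q: "q \<noteq> 0" "p * q = 1" by (simp_all add: p_def q_def flip: exp_add)
  have "- 2 * \<i> * u = - (\<i> * u) + - (\<i> * u)" by simp
  then have "exp (- 2 * \<i> * u) = q * q" by (simp only: q_def flip: exp_add)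
  then have "cayley (exp (- 2 * \<i> * u)) = (q * (\<i> * (p + q))) / (q * (p - q))"
    unfolding cayley_def using q(2) by (simp add: algebra_simps)
  also have "\<dots> = \<i> * (p + q) / (p - q)"
    using q(1) by simp
  also have "\<dots> = ((p + q) / 2) / ((p - q) / (2 * \<i>))"
    by (cases "p = q") (simp_all add: field_simps)
  also have "\<dots> = cot u"
    by (simp add: cot_def cos_exp_eq sin_exp_eq p_def q_def)
  finally show ?thesis ..
qed

lemma tan_eq_cayley: "tan u = - cayley (- exp (- 2 * \<i> * u))"
proof -
  define p q where "p = exp (\<i> * u)" and "q = exp (- (\<i> * u))"
  have q: "q \<noteq> 0" "p * q = 1" by (simp_all add: p_def q_def flip: exp_add)
  have "- 2 * \<i> * u = - (\<i> * u) + - (\<i> * u)" by simp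
  then have "exp (- 2 * \<i> * u) = q * q" by (simp only: q_def flip: exp_add)
  moreover have "1 - q * q = q * (p - q)" "1 + q * q = q * (p + q)"
    using q(2) by (simp_all add: algebra_simps)
  ultimately have "- cayley (- exp (- 2 * \<i> * u)) = q * (- \<i> * (p - q)) / (q * (p + q))"
    unfolding cayley_def by simp
  also have "\<dots> = - \<i> * (p - q) / (p + q)"
    using q(1) by simp
  also have "\<dots> = ((p - q) / (2 * \<i>)) / ((p + q) / 2)"
    by (cases "p + q = 0") (simp_all add: divide_simps)
  also have "\<dots> = tan u"
    by (simp add: tan_def cos_exp_eq sin_exp_eq p_def q_def)
  finally show ?thesis ..
qed

lemma cayley_inverse: "w \<noteq> 0 \<Longrightarrow> cayley (inverse w) = - cayley w"
  unfolding cayley_def by (cases "w = 1") (simp_all add: field_simps)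

lemma cayley_divide: "\<tau> \<noteq> 0 \<Longrightarrow> cayley (E / \<tau>) = \<i> * (\<tau> + E) / (\<tau> - E)"
proof -
  assume "\<tau> \<noteq> 0"
  then have "1 + E / \<tau> = (\<tau> + E) / \<tau>" "1 - E / \<tau> = (\<tau> - E) / \<tau>" by (simp_all add: field_simps)
  then show ?thesis unfolding cayley_def using \<open>\<tau> \<noteq> 0\<close> by simp
qed

lemma cayley_moebius: "x \<noteq> - \<i> \<Longrightarrow> cayley ((x - \<i>) / (x + \<i>)) = x"
proof -
  assume "x \<noteq> - \<i>"
  then have "x + \<i> \<noteq> 0" by (metis add.inverse_unique add.commute)
  then have "1 + (x - \<i>) / (x + \<i>) = 2 * x / (x + \<i>)" "1 - (x - \<i>) / (x + \<i>) = 2 * \<i> / (x + \<i>)"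
    by (simp_all add: field_simps)
  then show ?thesis unfolding cayley_def using \<open>x + \<i> \<noteq> 0\<close> by simp
qed

lemma cayley_diff_div_one_add_mult:
  assumes "s \<noteq> 1" "u \<noteq> 1" "u \<noteq> 0"
  shows "(cayley s - cayley u) / (1 + cayley s * cayley u) = cayley (- (s / u))"
proof -
  have "1 + s * u - (s + u) = (1 - s) * (1 - u)" by (simp add: algebra_simps)
  then have D: "1 - s \<noteq> 0" "1 - u \<noteq> 0" "1 + s * u - (s + u) \<noteq> 0"
    using assms by auto
  then have num: "cayley s - cayley u = 2 * \<i> * (s - u) / ((1 - s) * (1 - u))"
    and den: "1 + cayley s * cayley u = - 2 * (s + u) / ((1 - s) * (1 - u))"
    unfolding cayley_def by (simp_all add: field_simps)
  show ?thesis
  proof (cases "s + u = 0")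
    case True
    then have "s = - u" by (simp add: eq_neg_iff_add_eq_0)
    then show ?thesis unfolding den using assms(3) by (simp add: cayley_def)
  next
    case False
    have "1 + - (s / u) = (u - s) / u" "1 - - (s / u) = (u + s) / u"
      using assms(3) by (simp_all add: field_simps)
    then have "cayley (- (s / u)) = \<i> * (u - s) / (u + s)"
      unfolding cayley_def using assms(3) by simp
    moreover have "2 * \<i> * (s - u) / (- 2 * (s + u)) = \<i> * (u - s) / (u + s)"
      using False by (subst frac_eq_eq) (auto simp: algebra_simps add.commute)
    ultimately show ?thesis unfolding num den using D by simp
  qed
qed

lemma tan_addition_cayley:
  assumes x: "x \<noteq> \<i>" "x \<noteq> - \<i>" and E: "exp (- 2 * \<i> * T) \<noteq> -1"
  shows "(x + tan T) / (1 - x * tan T) = - cayley (exp (- 2 * \<i> * T) / ((x - \<i>) / (x + \<i>)))"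
proof -
  define \<tau> E where "\<tau> = (x - \<i>) / (x + \<i>)" and "E = exp (- 2 * \<i> * T)"
  have "x + \<i> \<noteq> 0" "x - \<i> \<noteq> 0" using x by (metis add.inverse_unique add.commute, simp)
  then have \<tau>: "\<tau> \<noteq> 0" "\<tau> \<noteq> 1" by (simp_all add: \<tau>_def)
  have "-E \<noteq> 1" "-E \<noteq> 0" using E unfolding E_def by (metis minus_minus, simp)
  have "(x + tan T) / (1 - x * tan T) = (cayley \<tau> - cayley (- E)) / (1 + cayley \<tau> * cayley (- E))"
    unfolding tan_eq_cayley E_def[symmetric] \<tau>_def cayley_moebius[OF x(2)] by simp
  also have "\<dots> = cayley (inverse (E / \<tau>))"
    using cayley_diff_div_one_add_mult[OF \<tau>(2) \<open>-E \<noteq> 1\<close> \<open>-E \<noteq> 0\<close>] by (simp add: field_simps)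
  also have "\<dots> = - cayley (E / \<tau>)"
    by (rule cayley_inverse) (simp add: E_def \<tau>(1))
  finally show ?thesis by (simp add: E_def \<tau>_def)
qed

lemma exp_Arctan_power:
  assumes "1 + \<i> * z \<noteq> 0" "1 - \<i> * z \<noteq> 0"
  shows "exp (- 2 * \<i> * (of_nat n * Arctan z)) = ((1 - \<i> * z) / (1 + \<i> * z)) ^ n"
proof -
  have "exp (- 2 * \<i> * Arctan z) = (1 - \<i> * z) / (1 + \<i> * z)"
    using assms by (simp add: Arctan_def)
  moreover have "- 2 * \<i> * (of_nat n * Arctan z) = of_nat n * (- 2 * \<i> * Arctan z)"
    by (simp add: algebra_simps)
  ultimately show ?thesis by (simp only: exp_of_nat_mult)
qed

lemma eventually_nhds_neq_if_isCont:
  fixes f :: "'a::t2_space \<Rightarrow> 'b::t1_space"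
  assumes "isCont f a" "f a \<noteq> c"
  shows "\<forall>\<^sub>F z in nhds a. f z \<noteq> c"
  by (rule tendsto_imp_eventually_ne[of f "f a"]) (use assms in \<open>simp_all add: isCont_def tendsto_nhds_iff\<close>)

lemma eventually_sums_power_sum:
  fixes d :: "'a \<Rightarrow> complex"
  assumes "finite K"
  shows "\<forall>\<^sub>F z in nhds 0. (\<lambda>m. (\<Sum>k\<in>K. d k ^ m) * z ^ m) sums (\<Sum>k\<in>K. 1 / (1 - z * d k))"
proof -
  have "isCont (\<lambda>z. norm (z * d k)) 0" for k
    by (intro continuous_intros)
  then have "((\<lambda>z. norm (z * d k)) \<longlongrightarrow> 0) (nhds 0)" for k
    by (simp add: isCont_def tendsto_nhds_iff)
  then have "\<forall>\<^sub>F z in nhds 0. \<forall>k\<in>K. norm (z * d k) < 1"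
    by (intro eventually_ball_finite assms ballI order_tendstoD(2)) auto
  then show ?thesis
  proof (rule eventually_mono)
    fix z assume "\<forall>k\<in>K. norm (z * d k) < 1"
    then have "(\<lambda>m. \<Sum>k\<in>K. (z * d k) ^ m) sums (\<Sum>k\<in>K. 1 / (1 - z * d k))"
      by (intro sums_sum geometric_sums) auto
    moreover have "(\<Sum>k\<in>K. (z * d k) ^ m) = z ^ m * (\<Sum>k\<in>K. d k ^ m)" for m
      by (simp add: power_mult_distrib sum_distrib_left)
    ultimately show "(\<lambda>m. (\<Sum>k\<in>K. d k ^ m) * z ^ m) sums (\<Sum>k\<in>K. 1 / (1 - z * d k))"
      by (simp add: mult.commute)
  qed
qed

lemma inverse_one_sub_mult_cayley:
  assumes b: "b * (1 + \<i> * z) = 1 - \<i> * z" and u: "u \<noteq> 1" "u \<noteq> b" and z: "1 + \<i> * z \<noteq> 0"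
  shows "1 / (1 - z * cayley u) = (1 - (1 - b) / (u - b)) / (1 + \<i> * z)"
proof -
  have "(1 + \<i> * z) * (u - b) = u * (1 + \<i> * z) - b * (1 + \<i> * z)" by (simp add: algebra_simps)
  also have "\<dots> = (u - 1) + \<i> * z * (1 + u)" unfolding b by (simp add: algebra_simps)
  finally have num: "(1 + \<i> * z) * (u - b) = (u - 1) + \<i> * z * (1 + u)" .
  have "1 - z * cayley u = ((u - 1) + \<i> * z * (1 + u)) / (u - 1)"
    unfolding cayley_def using u by (simp add: field_simps)
  then have "1 - z * cayley u = (1 + \<i> * z) * (u - b) / (u - 1)"
    by (simp only: num)
  moreover have "1 - (1 - b) / (u - b) = (u - 1) / (u - b)"
    using u by (simp add: field_simps)
  ultimately show ?thesis by simp
qed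

lemma sum_inverse_one_sub_mult_cayley:
  fixes \<zeta> b c z \<tau> :: complex
  assumes \<zeta>: "\<zeta> ^ n = 1" "inj_on (\<lambda>k. \<zeta> ^ k) {..<n}"
    and c: "c ^ n = \<tau>" and \<tau>: "\<tau> \<noteq> 0" "\<tau> \<noteq> 1"
    and b: "b * (1 + \<i> * z) = 1 - \<i> * z" "b ^ n \<noteq> \<tau>"
    and z: "1 + \<i> * z \<noteq> 0" "1 - \<i> * z \<noteq> 0"
  shows "(\<Sum>k<n. 1 / (1 - z * cayley (c * \<zeta> ^ k)))
           = of_nat n / (1 + z\<^sup>2) * (1 - z * cayley (b ^ n / \<tau>))"
proof -
  have n: "0 < n" using c \<tau>(2) by (cases n) auto
  define P where "P = b ^ (n - 1)"
  have bP: "b ^ n = b * P" unfolding P_def using n by (cases n) auto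
  have D: "\<tau> - b * P \<noteq> 0" using b(2) bP by simp
  have root: "(c * \<zeta> ^ k) ^ n = \<tau>" for k using c power_mult_root_unity[OF \<zeta>(1)] by simp
  have "c * \<zeta> ^ k \<noteq> 1" for k using root[of k] \<tau>(2) by (metis power_one)
  moreover have "c * \<zeta> ^ k \<noteq> b" for k using root[of k] b(2) by metis
  ultimately have "(\<Sum>k<n. 1 / (1 - z * cayley (c * \<zeta> ^ k)))
      = (\<Sum>k<n. (1 - (1 - b) / (c * \<zeta> ^ k - b)) / (1 + \<i> * z))"
    using b(1) z(1) by (intro sum.cong refl inverse_one_sub_mult_cayley)
  also have "\<dots> = (of_nat n - (1 - b) * (\<Sum>k<n. 1 / (c * \<zeta> ^ k - b))) / (1 + \<i> * z)"
    by (simp add: sum_subtractf sum_distrib_left flip: sum_divide_distrib)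
  also have "\<dots> = (of_nat n - (1 - b) * (of_nat n * P / (\<tau> - b * P))) / (1 + \<i> * z)"
    using sum_inverse_roots_diff[OF \<zeta> n c b(2)] by (simp add: P_def bP)
  also have "of_nat n - (1 - b) * (of_nat n * P / (\<tau> - b * P))
      = (of_nat n * (\<tau> - b * P) - (1 - b) * of_nat n * P) / (\<tau> - b * P)"
    using D by (simp add: diff_divide_eq_iff)
  also have "of_nat n * (\<tau> - b * P) - (1 - b) * of_nat n * P = of_nat n * (\<tau> - P)"
    by (simp add: algebra_simps)
  also have "of_nat n * (\<tau> - P) / (\<tau> - b * P) / (1 + \<i> * z)
      = of_nat n / (1 + z\<^sup>2) * (1 - z * cayley (b ^ n / \<tau>))"
  proof -
    have "b * P * (1 + \<i> * z) = P * (1 - \<i> * z)"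
      by (simp add: b(1)[symmetric] algebra_simps)
    then have "(\<tau> - b * P) - \<i> * z * (\<tau> + b * P) = (1 - \<i> * z) * (\<tau> - P)"
      by (simp add: algebra_simps)
    moreover have "1 - z * cayley (b ^ n / \<tau>) = ((\<tau> - b * P) - \<i> * z * (\<tau> + b * P)) / (\<tau> - b * P)"
      unfolding bP cayley_divide[OF \<tau>(1)] using D by (simp add: diff_divide_eq_iff)
    moreover have "1 + z\<^sup>2 = (1 - \<i> * z) * (1 + \<i> * z)"
      by (simp add: algebra_simps power2_eq_square)
    ultimately show ?thesis using z by simp
  qed
  finally show ?thesis .
qed

lemma eventually_sums_cayley_roots:
  fixes \<zeta> c \<tau> :: complex
  assumes \<zeta>: "\<zeta> ^ n = 1" "inj_on (\<lambda>k. \<zeta> ^ k) {..<n}" and c: "c ^ n = \<tau>" and \<tau>: "\<tau> \<noteq> 0" "\<tau> \<noteq> 1"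
  shows "\<forall>\<^sub>F z in nhds 0. (\<lambda>m. (\<Sum>k<n. cayley (c * \<zeta> ^ k) ^ m) * z ^ m) sums
           (of_nat n / (1 + z\<^sup>2) * (1 - z * cayley (exp (- 2 * \<i> * (of_nat n * Arctan z)) / \<tau>)))"
proof -
  have "\<forall>\<^sub>F z in nhds 0. 1 + \<i> * z \<noteq> 0" "\<forall>\<^sub>F z in nhds 0. 1 - \<i> * z \<noteq> 0"
    by (intro eventually_nhds_neq_if_isCont continuous_intros; simp)+
  moreover have "\<forall>\<^sub>F z in nhds 0. exp (- 2 * \<i> * (of_nat n * Arctan z)) \<noteq> \<tau>"
    using \<tau>(2) by (intro eventually_nhds_neq_if_isCont continuous_intros continuous_at_Arctan) auto
  moreover note eventually_sums_power_sum[OF finite_lessThan[of n], of "\<lambda>k. cayley (c * \<zeta> ^ k)"]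
  ultimately show ?thesis
  proof eventually_elim
    case (elim z)
    define b where "b = (1 - \<i> * z) / (1 + \<i> * z)"
    have b: "b * (1 + \<i> * z) = 1 - \<i> * z" using elim(1) by (simp add: b_def)
    have E: "exp (- 2 * \<i> * (of_nat n * Arctan z)) = b ^ n"
      unfolding b_def using elim(1,2) by (rule exp_Arctan_power)
    show ?case
      using elim(4) sum_inverse_one_sub_mult_cayley[OF \<zeta> c \<tau> b elim(3)[unfolded E] elim(1,2)]
      unfolding E by simp
  qed
qed

lemma eventually_sums_F_coeff:
  assumes n: "0 < n" and \<alpha>: "\<forall>j::int. \<alpha> \<noteq> real_of_int j * pi"
  shows "\<forall>\<^sub>F z in nhds 0. (\<lambda>m. complex_of_real (F_coeff n \<alpha> m) * z ^ m) sums
           (of_nat n / (1 + z\<^sup>2) * (1 - z * cot (of_nat n * Arctan z - complex_of_real \<alpha>)))"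
proof -
  define \<zeta> c \<tau> where "\<zeta> = exp (- 2 * pi * \<i> / of_nat n)"
    and "c = exp (- 2 * \<i> * of_real \<alpha> / of_nat n)" and "\<tau> = exp (- 2 * \<i> * of_real \<alpha>)"
  have "complex_of_real (cot ((\<alpha> + real k * pi) / real n)) = cayley (c * \<zeta> ^ k)" for k
  proof -
    have "- 2 * \<i> * complex_of_real ((\<alpha> + real k * pi) / real n)
        = - 2 * \<i> * of_real \<alpha> / of_nat n + of_nat k * (- 2 * pi * \<i> / of_nat n)"
      using n by (simp add: field_simps)
    then show ?thesis
      unfolding cot_of_real cot_eq_cayley c_def \<zeta>_def by (simp only: exp_add exp_of_nat_mult)
  qed
  then have coeff: "complex_of_real (F_coeff n \<alpha> m) = (\<Sum>k<n. cayley (c * \<zeta> ^ k) ^ m)" for m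
    by (simp add: F_coeff_def)
  have c: "c ^ n = \<tau>"
    using n by (simp add: c_def \<tau>_def flip: exp_of_nat_mult)
  have "\<tau> \<noteq> 1"
  proof
    assume "\<tau> = 1"
    then obtain j :: int where "- 2 * \<alpha> = of_int (2 * j) * pi"
      unfolding \<tau>_def exp_eq_1 by auto
    then have "\<alpha> = real_of_int (- j) * pi" by (simp add: algebra_simps)
    with \<alpha> show False by blast
  qed
  moreover have "cot (of_nat n * Arctan z - of_real \<alpha>) = cayley (exp (- 2 * \<i> * (of_nat n * Arctan z)) / \<tau>)" for z
  proof -
    have "- 2 * \<i> * (of_nat n * Arctan z - of_real \<alpha>) = - 2 * \<i> * (of_nat n * Arctan z) - - 2 * \<i> * of_real \<alpha>"
      by (simp add: algebra_simps)
    then show ?thesis unfolding cot_eq_cayley \<tau>_def by (simp only: exp_diff)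
  qed
  ultimately show ?thesis
    using eventually_sums_cayley_roots[OF exp_root_unity[OF n, folded \<zeta>_def] c] by (simp add: coeff \<tau>_def)
qed

lemma J_B_carrier: "x \<cdot>\<^sub>m J_mat n + B_mat n \<in> carrier_mat n n"
  unfolding J_mat_def B_mat_def by simp

lemma index_J_B:
  "i < n \<Longrightarrow> j < n \<Longrightarrow>
    (x \<cdot>\<^sub>m J_mat n + B_mat n) $$ (i, j) = x + \<i> * (if i < j then 1 else if j < i then -1 else 0)"
  unfolding J_mat_def B_mat_def by simp

lemma sum_sign_pow:
  fixes w :: complex
  assumes "l < n"
  shows "(\<Sum>j<n. (if l < j then 1 else if j < l then -1 else 0) * w ^ j)
           = (\<Sum>j<n. w ^ j) - w ^ l - 2 * (\<Sum>j<l. w ^ j)"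
proof -
  have "(\<Sum>j<n. (if l < j then 1 else if j < l then -1 else 0) * w ^ j)
      = (\<Sum>j<n. w ^ j - (if j = l then w ^ l else 0) - 2 * (if j < l then w ^ j else 0))"
    by (intro sum.cong) auto
  also have "\<dots> = (\<Sum>j<n. w ^ j) - w ^ l - 2 * (\<Sum>j<n. if j < l then w ^ j else 0)"
    using assms by (simp add: sum_subtractf sum_distrib_left)
  also have "(\<Sum>j<n. if j < l then w ^ j else 0) = (\<Sum>j<l. w ^ j)"
    using assms by (intro sum.mono_neutral_cong_right) auto
  finally show ?thesis .
qed

lemma J_B_eigenvector:
  fixes x w :: complex
  assumes w: "w ^ n * (x + \<i>) = x - \<i>" "w \<noteq> 1" and l: "l < n"
  shows "(\<Sum>j<n. (x \<cdot>\<^sub>m J_mat n + B_mat n) $$ (l, j) * w ^ j) = cayley w * w ^ l"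
proof -
  define G H where "G = (\<Sum>j<n. w ^ j)" and "H = (\<Sum>j<l. w ^ j)"
  have "(\<Sum>j<n. (x \<cdot>\<^sub>m J_mat n + B_mat n) $$ (l, j) * w ^ j)
      = x * G + \<i> * (\<Sum>j<n. (if l < j then 1 else if j < l then -1 else 0) * w ^ j)"
    using l by (simp add: G_def index_J_B sum.distrib sum_distrib_left algebra_simps)
  also have "\<dots> = x * G + \<i> * (G - w ^ l - 2 * H)"
    using l by (simp add: G_def H_def sum_sign_pow)
  finally have S: "(\<Sum>j<n. (x \<cdot>\<^sub>m J_mat n + B_mat n) $$ (l, j) * w ^ j) = x * G + \<i> * (G - w ^ l - 2 * H)" .
  have "(w - 1) * (x * G + \<i> * (G - w ^ l - 2 * H))
      = (x + \<i>) * ((w - 1) * G) - \<i> * w ^ l * (w - 1) - 2 * \<i> * ((w - 1) * H)"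
    by (simp add: algebra_simps)
  also have "\<dots> = - \<i> * w ^ l * (w + 1)"
    using w(1) by (simp add: G_def H_def flip: power_diff_1_eq) (simp add: algebra_simps)
  finally have "(w - 1) * (x * G + \<i> * (G - w ^ l - 2 * H)) = - \<i> * w ^ l * (w + 1)" .
  moreover have "w - 1 \<noteq> 0" "1 - w \<noteq> 0" using w(2) by auto
  ultimately show ?thesis
    unfolding S cayley_def by (simp add: field_simps)
qed

lemma dvd_add_diff_iff_eq:
  fixes j l n :: nat
  assumes "j < n" "l < n"
  shows "n dvd j + n - l \<longleftrightarrow> j = l"
proof
  assume "n dvd j + n - l"
  then obtain q where q: "j + n - l = n * q" ..
  with assms have "0 < n * q" "n * q < n * 2" by linarith+
  then have "0 < q" "q < 2" by simp_all
  then have "q = 1" by simp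
  with q have "j + n - l = n" by simp
  with assms show "j = l" by linarith
qed (use assms in simp)

lemma moment_coeff_J_B_eq_sum_cayley:
  fixes \<zeta> c x :: complex
  assumes \<zeta>: "\<zeta> ^ n = 1" "inj_on (\<lambda>k. \<zeta> ^ k) {..<n}"
    and c: "c ^ n = (x - \<i>) / (x + \<i>)" and x: "x \<noteq> \<i>" "x \<noteq> - \<i>"
  shows "moment_coeff (x \<cdot>\<^sub>m J_mat n + B_mat n) m = (\<Sum>k<n. cayley (c * \<zeta> ^ k) ^ m)"
proof -
  define \<tau> where "\<tau> = (x - \<i>) / (x + \<i>)"
  have xi: "x + \<i> \<noteq> 0" "x - \<i> \<noteq> 0"
    using x by (metis add.inverse_unique add.commute, simp)
  have \<tau>: "\<tau> \<noteq> 0" "\<tau> \<noteq> 1" using xi by (simp_all add: \<tau>_def)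
  define w where "w k = c * \<zeta> ^ k" for k
  have w: "w k ^ n = \<tau>" for k
    unfolding w_def \<tau>_def using c power_mult_root_unity[OF \<zeta>(1)] by simp
  have n: "0 < n" using w[of 0] \<tau>(2) by (cases n) auto
  \<comment> \<open>The columns of V are the eigenvectors j \<mapsto> w k ^ j; as all w k are n-th roots of \<tau>,
    orthogonality of the roots of unity makes W the inverse of V.\<close>
  define V W where "V = mat n n (\<lambda>(j, k). w k ^ j)"
    and "W = mat n n (\<lambda>(k, l). w k ^ (n - l) / (of_nat n * \<tau>))"
  have V: "V \<in> carrier_mat n n" and W: "W \<in> carrier_mat n n" by (simp_all add: V_def W_def)
  have VW: "V * W = 1\<^sub>m n"
  proof (rule eq_matI)
    fix j l assume "j < dim_row (1\<^sub>m n)" "l < dim_col (1\<^sub>m n)"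
    then have jl: "j < n" "l < n" by simp_all
    have "(V * W) $$ (j, l) = (\<Sum>k<n. (c * \<zeta> ^ k) ^ (j + n - l)) / (of_nat n * \<tau>)"
      unfolding index_mult_mat_sum[OF V W jl] using jl
      by (simp add: V_def W_def w_def sum_divide_distrib flip: power_add)
    also have "\<dots> = 1\<^sub>m n $$ (j, l)"
      using jl n \<tau>(1) c by (simp add: sum_pow_mult_roots_unity[OF \<zeta>] dvd_add_diff_iff_eq \<tau>_def)
    finally show "(V * W) $$ (j, l) = 1\<^sub>m n $$ (j, l)" .
  qed (use V W in simp_all)
  define D where "D = mat n n (\<lambda>(i, j). if i = j then cayley (w i) else 0)"
  have D: "D \<in> carrier_mat n n" by (simp add: D_def)
  have "(x \<cdot>\<^sub>m J_mat n + B_mat n) * V = V * D"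
  proof (rule eq_matI)
    fix l k assume "l < dim_row (V * D)" "k < dim_col (V * D)"
    then have lk: "l < n" "k < n" using V D by simp_all
    have "w k ^ n * (x + \<i>) = x - \<i>" "w k \<noteq> 1" using w[of k] xi \<tau>(2) by (auto simp: \<tau>_def)
    then have "((x \<cdot>\<^sub>m J_mat n + B_mat n) * V) $$ (l, k) = cayley (w k) * w k ^ l"
      unfolding index_mult_mat_sum[OF J_B_carrier V lk] using lk
      by (simp add: V_def J_B_eigenvector)
    also have "\<dots> = (\<Sum>j<n. if j = k then V $$ (l, j) * D $$ (j, k) else 0)"
      using lk by (simp add: V_def D_def)
    also have "\<dots> = (V * D) $$ (l, k)"
      unfolding index_mult_mat_sum[OF V D lk] using lk by (intro sum.cong) (auto simp: D_def)
    finally show "((x \<cdot>\<^sub>m J_mat n + B_mat n) * V) $$ (l, k) = (V * D) $$ (l, k)" .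
  qed (use V D in \<open>simp_all add: B_mat_def\<close>)
  then show ?thesis
    unfolding moment_coeff_def D_def using mat_trace_pow_diagonalizable[OF J_B_carrier V W VW] by (simp add: w_def)
qed

lemma moment_coeff_J_B_triangular:
  fixes x :: complex
  assumes "x\<^sup>2 = -1"
  shows "moment_coeff (x \<cdot>\<^sub>m J_mat n + B_mat n) m = of_nat n * x ^ m"
proof -
  have "x = \<i> \<or> x = - \<i>" using assms by (metis power2_eq_iff power2_i)
  then obtain R :: "nat \<Rightarrow> nat \<Rightarrow> bool" where R: "irreflp R" "transp R" "\<And>a b. a \<noteq> b \<Longrightarrow> R a b \<or> R b a"
    and zero: "\<And>i j. i < n \<Longrightarrow> j < n \<Longrightarrow> R i j \<Longrightarrow> (x \<cdot>\<^sub>m J_mat n + B_mat n) $$ (i, j) = 0"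
  proof (elim disjE)
    assume "x = \<i>"
    then show thesis by (intro that[of "\<lambda>i j. j < i"]) (auto simp: index_J_B irreflp_def transp_def)
  next
    assume "x = - \<i>"
    then show thesis by (intro that[of "(<)"]) (auto simp: index_J_B irreflp_def transp_def)
  qed
  have "moment_coeff (x \<cdot>\<^sub>m J_mat n + B_mat n) m = (\<Sum>i<n. (x \<cdot>\<^sub>m J_mat n + B_mat n) $$ (i, i) ^ m)"
    unfolding moment_coeff_def by (rule mat_trace_pow_triangular[OF J_B_carrier R zero])
  also have "\<dots> = of_nat n * x ^ m" by (simp add: index_J_B)
  finally show ?thesis .
qed

lemma eventually_sums_moment_coeff:
  fixes x :: complex
  assumes n: "0 < n"
  shows "\<forall>\<^sub>F z in nhds 0. (\<lambda>m. moment_coeff (x \<cdot>\<^sub>m J_mat n + B_mat n) m * z ^ m) sums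
           (of_nat n / (1 + z\<^sup>2) *
             (1 + z * (x + tan (of_nat n * Arctan z)) / (1 - x * tan (of_nat n * Arctan z))))"
proof (cases "x\<^sup>2 = -1")
  case True
  have "\<forall>\<^sub>F z in nhds 0. 1 + x * z \<noteq> 0"
    by (intro eventually_nhds_neq_if_isCont continuous_intros) simp
  moreover have "\<forall>\<^sub>F z in nhds 0. 1 - x * tan (of_nat n * Arctan z) \<noteq> 0"
    by (intro eventually_nhds_neq_if_isCont continuous_intros isCont_tan' continuous_at_Arctan) simp_all
  moreover note eventually_sums_power_sum[OF finite_lessThan[of n], of "\<lambda>_. x"]
  ultimately show ?thesis
  proof eventually_elim
    case (elim z)
    define t where "t = tan (of_nat n * Arctan z)"
    have "x + t = x * (1 - x * t)" using True by (simp add: algebra_simps power2_eq_square)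
    then have quot: "z * (x + t) / (1 - x * t) = z * x" using elim(2) by (simp add: t_def)
    have "(1 - z * x) * (1 + x * z) = 1 - x\<^sup>2 * z\<^sup>2" by (simp add: algebra_simps power2_eq_square)
    then have "1 + z\<^sup>2 = (1 - z * x) * (1 + x * z)" using True by simp
    with quot have "of_nat n / (1 + z\<^sup>2) * (1 + z * (x + t) / (1 - x * t)) = (\<Sum>k<n. 1 / (1 - z * x))"
      using elim(1) by (simp add: mult.commute)
    with elim(3) show ?case by (simp add: moment_coeff_J_B_triangular[OF True] t_def)
  qed
next
  case False
  then have x: "x \<noteq> \<i>" "x \<noteq> - \<i>" by auto
  then have "x + \<i> \<noteq> 0" "x - \<i> \<noteq> 0" by (metis add.inverse_unique add.commute, simp)
  then have \<tau>: "(x - \<i>) / (x + \<i>) \<noteq> 0" "(x - \<i>) / (x + \<i>) \<noteq> 1" by simp_all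
  define c where "c = exp (Ln ((x - \<i>) / (x + \<i>)) / of_nat n)"
  have c: "c ^ n = (x - \<i>) / (x + \<i>)"
    using n \<tau>(1) by (simp add: c_def flip: exp_of_nat_mult)
  note roots = exp_root_unity[OF n]
  have "\<forall>\<^sub>F z in nhds 0. exp (- 2 * \<i> * (of_nat n * Arctan z)) \<noteq> -1"
    by (intro eventually_nhds_neq_if_isCont continuous_intros continuous_at_Arctan) auto
  moreover note eventually_sums_cayley_roots[OF roots c \<tau>]
  ultimately show ?thesis
  proof eventually_elim
    case (elim z)
    have "z * (x + tan (of_nat n * Arctan z)) / (1 - x * tan (of_nat n * Arctan z))
        = - (z * cayley (exp (- 2 * \<i> * (of_nat n * Arctan z)) / ((x - \<i>) / (x + \<i>))))"
      using tan_addition_cayley[OF x elim(1)] by (metis times_divide_eq_right mult_minus_right)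
    then show ?case using elim(2) by (simp add: moment_coeff_J_B_eq_sum_cayley[OF roots c x])
  qed
qed

theorem proposition4p1:
  fixes n :: nat and \<alpha> :: real and x :: complex
  assumes "n \<ge> 2" and "\<forall>j::int. \<alpha> \<noteq> real_of_int j * pi"
  shows "(\<exists>r>0. \<forall>z::complex. norm z < r \<longrightarrow>
            (\<lambda>m. complex_of_real (F_coeff n \<alpha> m) * z ^ m) sums
            (of_nat n / (1 + z\<^sup>2) * (1 - z * cot (of_nat n * Arctan z - complex_of_real \<alpha>))))
       \<and> (\<exists>r>0. \<forall>z::complex. norm z < r \<longrightarrow>
            (\<lambda>m. moment_coeff (x \<cdot>\<^sub>m J_mat n + B_mat n) m * z ^ m) sums
            (of_nat n / (1 + z\<^sup>2) *
              (1 + z * (x + tan (of_nat n * Arctan z)) / (1 - x * tan (of_nat n * Arctan z)))))"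
proof -
  have n: "0 < n" using assms(1) by simp
  have ball: "\<exists>r>0. \<forall>z. norm z < r \<longrightarrow> P z" if "\<forall>\<^sub>F z in nhds (0 :: complex). P z" for P
    using that unfolding eventually_nhds_metric by (simp add: dist_norm)
  show ?thesis
    using ball[OF eventually_sums_F_coeff[OF n assms(2)]] ball[OF eventually_sums_moment_coeff[OF n]]
    by blast
qed

end
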